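(* Let $G,H$ be locally compact second countable compactly generated groups, $\varphi\colon\mathbb{R}_+\to\mathbb{R}_+$ a map, $G\curvearrowright(X,\nu)$ a free probability measure-preserving action on a standard probability space, and $c\colon G\times X\to H$ a $\varphi$-integrable $H$-valued cocycle. Then there exist a measurable subset $A\subset G$ and a sequence $(K_n)_{n\ge1}$ of positive integers such that: $\lambda_G(A)>0$ and $A$ contains a countable dense subset of $G$; $K_n\to+\infty$; and for every $g\in A$ the series $\sum_{n\ge1}K_n\,\varphi(n)\,\nu(\{x: |c(g,x)|_H=n\})$ converges.
   Context: An $H$-valued cocycle is a measurable $c\colon G\times X\to H$ with $c(g_1g_2,x)=c(g_1,g_2\cdot x)c(g_2,x)$. $|\cdot|_H$ is the (integer-valued) word length on $H$ for a compact generating set; $\lambda_G$ is a Haar measure; $c$ is $\varphi$-integrable if $\sup_{g\in S_G}\int_X\varphi(|c(g,x)|_H)\,d\nu(x)<\infty$ for a compact generating set $S_G$ of $G$ (and in particular $\int_X\varphi(|c(g,x)|_H)d\nu(x)<\infty$ for every $g\in G$). *)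

theory Defs
  imports "HOL-Analysis.Analysis" "HOL-Probability.Probability"
begin

text \<open>Groups are written additively (type class group_add, possibly non-commutative).\<close>

definition generates :: "'a::group_add set \<Rightarrow> bool" where
  "generates S \<longleftrightarrow> (\<forall>h. \<exists>xs. set xs \<subseteq> S \<union> uminus ` S \<and> sum_list xs = h)"

definition word_length :: "'a::group_add set \<Rightarrow> 'a \<Rightarrow> nat" where
  "word_length S h = (LEAST n. \<exists>xs. length xs = n \<and> set xs \<subseteq> S \<union> uminus ` S \<and> sum_list xs = h)"

definition compactly_generated :: "'a::{group_add,topological_space} itself \<Rightarrow> bool" where
  "compactly_generated _ \<longleftrightarrow> (\<exists>S::'a set. compact S \<and> generates S)"

definition haar_measure :: "'a::topological_group_add measure \<Rightarrow> bool" where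
  "haar_measure M \<longleftrightarrow>
     sets M = sets borel \<and>
     (\<forall>g. \<forall>A\<in>sets borel. emeasure M ((+) g ` A) = emeasure M A) \<and>
     (\<forall>K. compact K \<longrightarrow> emeasure M K < \<infinity>) \<and>
     (\<forall>U. open U \<and> U \<noteq> {} \<longrightarrow> emeasure M U > 0) \<and>
     (\<forall>A\<in>sets borel. emeasure M A = (INF U\<in>{U. open U \<and> A \<subseteq> U}. emeasure M U)) \<and>
     (\<forall>U. open U \<longrightarrow> emeasure M U = (SUP K\<in>{K. compact K \<and> K \<subseteq> U}. emeasure M K))"

definition pmp_action :: "('g::{topological_group_add} \<Rightarrow> 'x \<Rightarrow> 'x) \<Rightarrow> 'x measure \<Rightarrow> bool" where
  "pmp_action act \<nu> \<longleftrightarrow>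
     prob_space \<nu> \<and>
     (\<lambda>(g, x). act g x) \<in> measurable (borel \<Otimes>\<^sub>M \<nu>) \<nu> \<and>
     (\<forall>x\<in>space \<nu>. act 0 x = x) \<and>
     (\<forall>g1 g2. \<forall>x\<in>space \<nu>. act (g1 + g2) x = act g1 (act g2 x)) \<and>
     (\<forall>g. distr \<nu> \<nu> (act g) = \<nu>)"

definition free_action :: "('g::group_add \<Rightarrow> 'x \<Rightarrow> 'x) \<Rightarrow> 'x measure \<Rightarrow> bool" where
  "free_action act \<nu> \<longleftrightarrow> (\<forall>g. \<forall>x\<in>space \<nu>. act g x = x \<longrightarrow> g = 0)"

definition cocycle :: "('g::topological_group_add \<Rightarrow> 'x \<Rightarrow> 'x) \<Rightarrow> 'x measure \<Rightarrow>
    ('g \<Rightarrow> 'x \<Rightarrow> 'h::topological_group_add) \<Rightarrow> bool" where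
  "cocycle act \<nu> c \<longleftrightarrow>
     (\<lambda>(g, x). c g x) \<in> borel_measurable (borel \<Otimes>\<^sub>M \<nu>) \<and>
     (\<forall>g1 g2. \<forall>x\<in>space \<nu>. c (g1 + g2) x = c g1 (act g2 x) + c g2 x)"

text \<open>phi-integrability w.r.t. compact generating sets SG of G and SH of H
  (including, as in the paper, finiteness of the integral for every g).\<close>
definition phi_integrable :: "(real \<Rightarrow> real) \<Rightarrow> 'g::group_add set \<Rightarrow> 'h::group_add set \<Rightarrow>
    'x measure \<Rightarrow> ('g \<Rightarrow> 'x \<Rightarrow> 'h) \<Rightarrow> bool" where
  "phi_integrable \<phi> SG SH \<nu> c \<longleftrightarrow>
     (\<exists>B::real. \<forall>g\<in>SG. (\<integral>\<^sup>+ x. ennreal (\<phi> (real (word_length SH (c g x)))) \<partial>\<nu>) \<le> ennreal B) \<and>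
     (\<forall>g. (\<integral>\<^sup>+ x. ennreal (\<phi> (real (word_length SH (c g x)))) \<partial>\<nu>) < \<infinity>)"

end

theory Submission
  imports Defs
begin

text \<open>
  For each g, phi-integrability makes the series a_n(g) = phi(n) nu{x. |c(g,x)| = n} converge,
  and a_n is measurable in g. The tails R_N(g) of this series decrease to 0, so an Egorov-type
  argument on a compact set of positive finite Haar measure yields indices N_k >= k and a set B of
  positive measure on which R_(N_k) <= 2^-k for all k; at stage k one also controls the first k
  points of a countable dense set D. With K_n = 1 + #{k. N_k <= n}, which tends to infinity,
  exchanging the order of summation gives sum_n K_n a_n(g) = sum_n a_n(g) + sum_k R_(N_k)(g),
  which is finite for g in A = B \<union> D.
\<close>

section \<open>Word length\<close>

lemma word_length_le_iff:
  assumes "generates S"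
  shows "word_length S h \<le> n \<longleftrightarrow>
    (\<exists>xs. length xs \<le> n \<and> set xs \<subseteq> S \<union> uminus ` S \<and> sum_list xs = h)"
proof
  let ?word = "\<lambda>n. \<exists>xs. length xs = n \<and> set xs \<subseteq> S \<union> uminus ` S \<and> sum_list xs = h"
  obtain xs where "set xs \<subseteq> S \<union> uminus ` S" "sum_list xs = h"
    using assms unfolding generates_def by blast
  then have "?word (length xs)"
    by blast
  then have "?word (Least ?word)"
    by (rule LeastI)
  then show "word_length S h \<le> n \<Longrightarrow>
      \<exists>xs. length xs \<le> n \<and> set xs \<subseteq> S \<union> uminus ` S \<and> sum_list xs = h"
    unfolding word_length_def by force
next
  assume "\<exists>xs. length xs \<le> n \<and> set xs \<subseteq> S \<union> uminus ` S \<and> sum_list xs = h"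
  then obtain xs where "length xs \<le> n" "set xs \<subseteq> S \<union> uminus ` S" "sum_list xs = h"
    by blast
  then have "word_length S h \<le> length xs"
    unfolding word_length_def by (intro Least_le) blast
  then show "word_length S h \<le> n"
    using \<open>length xs \<le> n\<close> by linarith
qed

lemma compact_sum_lists:
  fixes T :: "'a::topological_group_add set"
  assumes "compact T"
  shows "compact {sum_list xs | xs. length xs = m \<and> set xs \<subseteq> T}"
proof (induction m)
  case 0
  then show ?case by simp
next
  case (Suc m)
  have "{sum_list xs | xs. length xs = Suc m \<and> set xs \<subseteq> T} =
      (\<lambda>p. fst p + snd p) ` (T \<times> {sum_list xs | xs. length xs = m \<and> set xs \<subseteq> T})"
  proof (intro set_eqI iffI)
    fix y assume "y \<in> {sum_list xs | xs. length xs = Suc m \<and> set xs \<subseteq> T}"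
    then obtain a xs where "y = a + sum_list xs" "a \<in> T" "length xs = m" "set xs \<subseteq> T"
      by (auto simp: length_Suc_conv)
    then show "y \<in> (\<lambda>p. fst p + snd p) ` (T \<times> {sum_list xs | xs. length xs = m \<and> set xs \<subseteq> T})"
      by (auto intro!: image_eqI[where x="(a, sum_list xs)"])
  next
    fix y assume "y \<in> (\<lambda>p. fst p + snd p) ` (T \<times> {sum_list xs | xs. length xs = m \<and> set xs \<subseteq> T})"
    then obtain a xs where "y = sum_list (a # xs)" "length (a # xs) = Suc m" "set (a # xs) \<subseteq> T"
      by auto
    then show "y \<in> {sum_list xs | xs. length xs = Suc m \<and> set xs \<subseteq> T}"
      by blast
  qed
  then show ?case
    by (simp only:) (intro compact_continuous_image compact_Times Suc assms continuous_intros)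
qed

lemma closed_word_length_le:
  fixes S :: "'a::{topological_group_add, t2_space} set"
  assumes "generates S" "compact S"
  shows "closed {h. word_length S h \<le> n}"
proof -
  let ?T = "S \<union> uminus ` S"
  have "{h. word_length S h \<le> n} = (\<Union>m\<le>n. {sum_list xs | xs. length xs = m \<and> set xs \<subseteq> ?T})"
    using word_length_le_iff[OF assms(1)] by auto
  moreover have "compact ?T"
    by (intro compact_Un assms compact_continuous_image continuous_intros)
  ultimately show ?thesis
    by (simp add: compact_imp_closed compact_UN compact_sum_lists)
qed

lemma word_length_eq_borel:
  fixes S :: "'a::{topological_group_add, t2_space} set"
  assumes "generates S" "compact S"
  shows "{h. word_length S h = n} \<in> sets borel"
proof (cases n)
  case 0
  then show ?thesis
    using closed_word_length_le[OF assms, of 0] by (simp add: borel_closed)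
next
  case (Suc m)
  then have "{h. word_length S h = n} = {h. word_length S h \<le> n} - {h. word_length S h \<le> m}"
    by auto
  then show ?thesis
    using closed_word_length_le[OF assms] by (simp add: borel_closed sets.Diff)
qed

lemma measurable_word_length:
  fixes S :: "'a::{topological_group_add, t2_space} set"
  assumes "generates S" "compact S"
  shows "word_length S \<in> measurable borel (count_space UNIV)"
proof -
  have "word_length S -` {n} = {h. word_length S h = n}" for n
    by auto
  then show ?thesis
    using word_length_eq_borel[OF assms] by (auto simp: measurable_count_space_eq2_countable)
qed

lemma measurable_word_length_comp:
  fixes S :: "'a::{topological_group_add, t2_space} set"
  assumes "generates S" "compact S" "f \<in> borel_measurable M"
  shows "(\<lambda>x. word_length S (f x)) \<in> measurable M (count_space UNIV)"
  using measurable_compose[OF assms(3) measurable_word_length[OF assms(1,2)]] by (simp add: comp_def)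

section \<open>Tails of series and weights tending to infinity\<close>

lemma suminf_commute_ennreal:
  fixes f :: "nat \<Rightarrow> nat \<Rightarrow> ennreal"
  shows "(\<Sum>n. \<Sum>k. f n k) = (\<Sum>k. \<Sum>n. f n k)"
proof -
  have "(\<Sum>n. \<Sum>k. f n k) = (\<Sum>n. \<integral>\<^sup>+k. f n k \<partial>count_space UNIV)"
    by (simp add: nn_integral_count_space_nat)
  also have "\<dots> = (\<integral>\<^sup>+k. (\<Sum>n. f n k) \<partial>count_space UNIV)"
    by (rule nn_integral_suminf[symmetric]) auto
  also have "\<dots> = (\<Sum>k. \<Sum>n. f n k)"
    by (simp add: nn_integral_count_space_nat)
  finally show ?thesis .
qed

definition tail_sum :: "(nat \<Rightarrow> real) \<Rightarrow> nat \<Rightarrow> real" where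
  "tail_sum a N = (\<Sum>n. if N \<le> n then a n else 0)"

lemma summable_tail_terms:
  fixes a :: "nat \<Rightarrow> real"
  assumes "summable a"
  shows "summable (\<lambda>n. if N \<le> n then a n else 0)"
proof -
  have "(\<lambda>n. if N \<le> n then a n else 0) = (\<lambda>n. a n - (if n < N then a n else 0))"
    by auto
  moreover have "summable (\<lambda>n. a n - (if n < N then a n else 0))"
    using assms by (intro summable_diff) auto
  ultimately show ?thesis
    by (simp only:)
qed

lemma tail_sum_eq_diff:
  fixes a :: "nat \<Rightarrow> real"
  assumes "summable a"
  shows "tail_sum a N = suminf a - (\<Sum>n<N. a n)"
proof -
  have "tail_sum a N = (\<Sum>n. a n - (if n < N then a n else 0))"
    unfolding tail_sum_def by (rule suminf_cong) auto
  also have "\<dots> = suminf a - (\<Sum>n. if n < N then a n else 0)"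
    using assms by (subst suminf_diff) auto
  also have "(\<Sum>n. if n < N then a n else 0) = (\<Sum>n<N. a n)"
    using sums_If_finite[of "\<lambda>n. n < N" a] by (simp add: sums_iff lessThan_def)
  finally show ?thesis .
qed

lemma tail_sum_nonneg:
  fixes a :: "nat \<Rightarrow> real"
  assumes "\<And>n. 0 \<le> a n" "summable a"
  shows "0 \<le> tail_sum a N"
  unfolding tail_sum_def using assms by (intro suminf_nonneg summable_tail_terms) auto

lemma decseq_tail_sum:
  fixes a :: "nat \<Rightarrow> real"
  assumes "\<And>n. 0 \<le> a n" "summable a"
  shows "decseq (tail_sum a)"
  unfolding decseq_def tail_sum_def using assms by (auto intro!: suminf_le summable_tail_terms)

lemma tail_sum_LIMSEQ_zero:
  fixes a :: "nat \<Rightarrow> real"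
  assumes "summable a"
  shows "(\<lambda>N. tail_sum a N) \<longlonglongrightarrow> 0"
proof -
  have "(\<lambda>N. suminf a - (\<Sum>n<N. a n)) \<longlonglongrightarrow> suminf a - suminf a"
    using assms by (intro tendsto_diff tendsto_const summable_LIMSEQ)
  then show ?thesis
    by (simp add: tail_sum_eq_diff[OF assms])
qed

lemma borel_measurable_tail_sum:
  fixes a :: "nat \<Rightarrow> 'a \<Rightarrow> real"
  assumes [measurable]: "\<And>n. a n \<in> borel_measurable M"
  shows "(\<lambda>x. tail_sum (\<lambda>n. a n x) N) \<in> borel_measurable M"
  unfolding tail_sum_def by measurable

lemma finite_indices_le:
  fixes N :: "nat \<Rightarrow> nat"
  assumes "\<And>k. k \<le> N k"
  shows "finite {k. N k \<le> n}"
proof (rule finite_subset[of _ "{..n}"])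
  show "{k. N k \<le> n} \<subseteq> {..n}"
  proof
    fix k assume "k \<in> {k. N k \<le> n}"
    then show "k \<in> {..n}"
      using assms[of k] by simp
  qed
qed simp

lemma filterlim_card_le_at_top:
  fixes N :: "nat \<Rightarrow> nat"
  assumes "\<And>k. k \<le> N k"
  shows "filterlim (\<lambda>n. card {k. N k \<le> n}) at_top sequentially"
  unfolding filterlim_at_top
proof
  fix Z :: nat
  have "Z \<le> card {k. N k \<le> n}" if "(\<Sum>k<Z. N k) \<le> n" for n
  proof -
    have "{..<Z} \<subseteq> {k. N k \<le> n}"
    proof (intro subsetI CollectI)
      fix k assume "k \<in> {..<Z}"
      then have "N k \<le> (\<Sum>k<Z. N k)"
        by (intro member_le_sum) auto
      then show "N k \<le> n"
        using that by linarith
    qed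
    moreover have "finite {k. N k \<le> n}"
      using assms by (rule finite_indices_le)
    ultimately show ?thesis
      using card_mono[of "{k. N k \<le> n}" "{..<Z}"] by simp
  qed
  then show "\<forall>\<^sub>F n in sequentially. Z \<le> card {k. N k \<le> n}"
    unfolding eventually_sequentially by blast
qed

lemma summable_weighted_by_tail_indices:
  fixes a :: "nat \<Rightarrow> real" and N :: "nat \<Rightarrow> nat"
  assumes nonneg: "\<And>n. 0 \<le> a n" and summable: "summable a"
    and N: "\<And>k. k \<le> N k" and tails: "summable (\<lambda>k. tail_sum a (N k))"
  shows "summable (\<lambda>n. real (Suc (card {k. N k \<le> n})) * a n)"
proof -
  define F where "F n k = ennreal (if N k \<le> n then a n else 0)" for n k
  have weight: "ennreal (real (Suc (card {k. N k \<le> n})) * a n) = ennreal (a n) + (\<Sum>k. F n k)"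
    for n
  proof -
    have fin: "finite {k. N k \<le> n}"
      using N by (rule finite_indices_le)
    have "(\<Sum>k. F n k) = (\<Sum>k\<in>{k. N k \<le> n}. F n k)"
      by (rule suminf_finite[OF fin]) (simp add: F_def)
    also have "\<dots> = of_nat (card {k. N k \<le> n}) * ennreal (a n)"
      by (simp add: F_def)
    finally show ?thesis
      using nonneg[of n]
      by (simp add: ennreal_mult' ennreal_of_nat_eq_real_of_nat distrib_right)
  qed
  have "(\<Sum>n. ennreal (real (Suc (card {k. N k \<le> n})) * a n))
      = (\<Sum>n. ennreal (a n) + (\<Sum>k. F n k))"
    by (simp only: weight)
  also have "\<dots> = (\<Sum>n. ennreal (a n)) + (\<Sum>n. \<Sum>k. F n k)"
    by (rule suminf_add[symmetric]) auto
  also have "(\<Sum>n. \<Sum>k. F n k) = (\<Sum>k. \<Sum>n. F n k)"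
    by (rule suminf_commute_ennreal)
  also have "(\<Sum>k. \<Sum>n. F n k) = (\<Sum>k. ennreal (tail_sum a (N k)))"
    unfolding F_def tail_sum_def using nonneg summable
    by (subst suminf_ennreal2) (auto intro: summable_tail_terms)
  also have "\<dots> = ennreal (\<Sum>k. tail_sum a (N k))"
    using nonneg summable tails by (intro suminf_ennreal2 tail_sum_nonneg)
  also have "(\<Sum>n. ennreal (a n)) = ennreal (suminf a)"
    using nonneg summable by (intro suminf_ennreal2)
  finally show ?thesis
    by (intro summable_suminf_not_top) (simp_all add: nonneg)
qed

section \<open>An Egorov-type selection of tail indices\<close>

lemma sets_superlevel_within:
  fixes f :: "'a \<Rightarrow> real"
  assumes [measurable]: "C \<in> sets M" "f \<in> borel_measurable M"
  shows "{x\<in>C. e < f x} \<in> sets M"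
proof -
  have "{x\<in>C. e < f x} = C \<inter> {x\<in>space M. e < f x}"
    using sets.sets_into_space[OF assms(1)] by auto
  then show ?thesis
    by simp
qed

lemma tendsto_emeasure_superlevel_zero:
  fixes f :: "nat \<Rightarrow> 'a \<Rightarrow> real"
  assumes [measurable]: "\<And>N. f N \<in> borel_measurable M"
    and dec: "\<And>x. decseq (\<lambda>N. f N x)"
    and lim: "\<And>x. (\<lambda>N. f N x) \<longlonglongrightarrow> 0"
    and C: "C \<in> sets M" and fin: "emeasure M C < \<infinity>" and "0 < e"
  shows "(\<lambda>N. emeasure M {x\<in>C. e < f N x}) \<longlonglongrightarrow> 0"
proof -
  have "(\<lambda>N. emeasure M {x\<in>C. e < f N x}) \<longlonglongrightarrow> emeasure M (\<Inter>N. {x\<in>C. e < f N x})"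
  proof (rule Lim_emeasure_decseq)
    show "range (\<lambda>N. {x\<in>C. e < f N x}) \<subseteq> sets M"
      using sets_superlevel_within[OF C] by auto
    show "decseq (\<lambda>N. {x\<in>C. e < f N x})"
      using dec by (auto simp: decseq_def intro: less_le_trans)
    show "emeasure M {x\<in>C. e < f N x} \<noteq> \<infinity>" for N
      using fin emeasure_mono[of "{x\<in>C. e < f N x}" C M] C by (auto simp: top_unique)
  qed
  moreover have "(\<Inter>N. {x\<in>C. e < f N x}) = {}"
  proof -
    have "\<not> (\<forall>N. e < f N x)" for x
      using order_tendstoD(2)[OF lim[of x] \<open>0 < e\<close>] unfolding eventually_sequentially
      by (metis le_refl less_asym)
    then show ?thesis
      by blast
  qed
  ultimately show ?thesis
    by simp
qed

lemma emeasure_Diff_UN_pos: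
  assumes "C \<in> sets M" "range E \<subseteq> sets M" "(\<Sum>k. emeasure M (E k)) < emeasure M C"
  shows "0 < emeasure M (C - (\<Union>k. E k))"
proof (rule ccontr)
  assume "\<not> 0 < emeasure M (C - (\<Union>k. E k))"
  then have null: "emeasure M (C - (\<Union>k. E k)) = 0"
    by simp
  have "emeasure M C \<le> emeasure M ((C - (\<Union>k. E k)) \<union> (\<Union>k. E k))"
    using assms by (intro emeasure_mono) auto
  also have "\<dots> \<le> emeasure M (C - (\<Union>k. E k)) + emeasure M (\<Union>k. E k)"
    using assms by (intro emeasure_subadditive) auto
  also have "\<dots> \<le> (\<Sum>k. emeasure M (E k))"
    using null emeasure_subadditive_countably[OF assms(2)] by simp
  finally show False
    using assms(3) by simp
qed

lemma exists_index_superlevel_small: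
  fixes f :: "nat \<Rightarrow> 'a \<Rightarrow> real"
  assumes "\<And>N. f N \<in> borel_measurable M"
    and "\<And>x. decseq (\<lambda>N. f N x)"
    and lim: "\<And>x. (\<lambda>N. f N x) \<longlonglongrightarrow> 0"
    and "C \<in> sets M" "emeasure M C < \<infinity>" "0 < e" "0 < \<epsilon>" "finite F"
  shows "\<exists>N\<ge>k. emeasure M {x\<in>C. e < f N x} < \<epsilon> \<and> (\<forall>y\<in>F. f N y < e)"
proof -
  have "(\<lambda>N. emeasure M {x\<in>C. e < f N x}) \<longlonglongrightarrow> 0"
    using assms(1-6) by (rule tendsto_emeasure_superlevel_zero)
  then have "\<forall>\<^sub>F N in sequentially. emeasure M {x\<in>C. e < f N x} < \<epsilon>"
    using \<open>0 < \<epsilon>\<close> by (rule order_tendstoD(2))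
  moreover have "\<forall>\<^sub>F N in sequentially. \<forall>y\<in>F. f N y < e"
    using \<open>finite F\<close>
  proof (rule eventually_ball_finite)
    show "\<forall>y\<in>F. \<forall>\<^sub>F N in sequentially. f N y < e"
      using order_tendstoD(2)[OF lim \<open>0 < e\<close>] by blast
  qed
  ultimately have "\<forall>\<^sub>F N in sequentially. k \<le> N \<and> emeasure M {x\<in>C. e < f N x} < \<epsilon> \<and> (\<forall>y\<in>F. f N y < e)"
    by (intro eventually_conj eventually_ge_at_top)
  then show ?thesis
    unfolding eventually_sequentially by blast
qed

lemma ennreal_exists_positive_summable_below:
  fixes c :: ennreal
  assumes "0 < c" "c < \<infinity>"
  obtains \<epsilon> :: "nat \<Rightarrow> ennreal" where "\<And>k. 0 < \<epsilon> k" "(\<Sum>k. \<epsilon> k) < c"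
proof -
  obtain m where m: "c = ennreal m" "0 < m"
    using assms by (cases c) auto
  have "(\<Sum>k. ennreal (m/4 * (1/2)^k)) = ennreal (\<Sum>k. m/4 * (1/2)^k)"
    using m by (intro suminf_ennreal2 summable_mult summable_geometric) auto
  also have "(\<Sum>k. m/4 * (1/2::real)^k) = m/2"
    by (subst suminf_mult) (auto simp: suminf_geometric)
  also have "ennreal (m/2) < c"
    using m by (simp add: ennreal_less_iff)
  finally show ?thesis
    using m by (intro that[of "\<lambda>k. ennreal (m/4 * (1/2)^k)"]) auto
qed

lemma exists_indices_small_superlevel_sets:
  fixes f :: "nat \<Rightarrow> 'a \<Rightarrow> real" and d :: "nat \<Rightarrow> 'a"
  assumes "\<And>N. f N \<in> borel_measurable M" "\<And>x. decseq (\<lambda>N. f N x)"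
    and "\<And>x. (\<lambda>N. f N x) \<longlonglongrightarrow> 0"
    and "C \<in> sets M" "0 < emeasure M C" "emeasure M C < \<infinity>"
  obtains N where "\<And>k. k \<le> N k"
    "(\<Sum>k. emeasure M {x\<in>C. (1/2)^k < f (N k) x}) < emeasure M C"
    "\<And>j k. j \<le> k \<Longrightarrow> f (N k) (d j) < (1/2)^k"
proof -
  obtain \<epsilon> where \<epsilon>: "\<And>k. 0 < \<epsilon> k" "(\<Sum>k. \<epsilon> k) < emeasure M C"
    by (rule ennreal_exists_positive_summable_below[OF assms(5,6)]) (rule that)
  have "\<exists>N\<ge>k. emeasure M {x\<in>C. (1/2)^k < f N x} < \<epsilon> k \<and> (\<forall>y\<in>d ` {..k}. f N y < (1/2)^k)" for k
    by (rule exists_index_superlevel_small[OF assms(1-4,6)]) (simp_all add: \<epsilon>(1))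
  then have "\<exists>N. \<forall>k. k \<le> N k \<and> emeasure M {x\<in>C. (1/2)^k < f (N k) x} < \<epsilon> k \<and>
      (\<forall>y\<in>d ` {..k}. f (N k) y < (1/2)^k)"
    by (intro choice allI)
  then obtain N where N: "\<forall>k. k \<le> N k \<and> emeasure M {x\<in>C. (1/2)^k < f (N k) x} < \<epsilon> k \<and>
      (\<forall>y\<in>d ` {..k}. f (N k) y < (1/2)^k)"
    by blast
  show ?thesis
  proof (rule that)
    show "k \<le> N k" for k
      using N by simp
    have "(\<Sum>k. emeasure M {x\<in>C. (1/2)^k < f (N k) x}) \<le> (\<Sum>k. \<epsilon> k)"
      using N by (intro suminf_le) (auto intro: less_imp_le)
    then show "(\<Sum>k. emeasure M {x\<in>C. (1/2)^k < f (N k) x}) < emeasure M C"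
      using \<epsilon>(2) by (rule le_less_trans)
    show "f (N k) (d j) < (1/2)^k" if "j \<le> k" for j k
      using N that by auto
  qed
qed

lemma exists_subsequence_summable_on_positive_set:
  fixes f :: "nat \<Rightarrow> 'a \<Rightarrow> real"
  assumes meas: "\<And>N. f N \<in> borel_measurable M"
    and nonneg: "\<And>N x. 0 \<le> f N x"
    and dec: "\<And>x. decseq (\<lambda>N. f N x)"
    and lim: "\<And>x. (\<lambda>N. f N x) \<longlonglongrightarrow> 0"
    and C: "C \<in> sets M" and "0 < emeasure M C" "emeasure M C < \<infinity>"
    and "countable D"
  obtains B N where "B \<in> sets M" "0 < emeasure M B" "\<And>k. k \<le> N k"
    "\<And>x. x \<in> B \<union> D \<Longrightarrow> summable (\<lambda>k. f (N k) x)"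
proof -
  define d where "d = from_nat_into D"
  obtain N where N: "\<And>k. k \<le> N k"
    and small: "(\<Sum>k. emeasure M {x\<in>C. (1/2)^k < f (N k) x}) < emeasure M C"
    and points: "\<And>j k. j \<le> k \<Longrightarrow> f (N k) (d j) < (1/2)^k"
    by (rule exists_indices_small_superlevel_sets[OF meas dec lim assms(5-7)]) (rule that)
  define B where "B = C - (\<Union>k. {x\<in>C. (1/2)^k < f (N k) x})"
  have sets: "{x\<in>C. (1/2)^k < f (N k) x} \<in> sets M" for k
    using C meas by (rule sets_superlevel_within)
  show ?thesis
  proof (rule that)
    show "B \<in> sets M"
      unfolding B_def using C sets by auto
    show "0 < emeasure M B"
      unfolding B_def using C sets small by (intro emeasure_Diff_UN_pos) auto
    show "k \<le> N k" for k
      by (rule N)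
    show "summable (\<lambda>k. f (N k) x)" if "x \<in> B \<union> D" for x
    proof -
      have "\<exists>j. \<forall>k\<ge>j. f (N k) x \<le> (1/2)^k"
      proof (cases "x \<in> B")
        case True
        then show ?thesis
          unfolding B_def by (auto simp: not_less)
      next
        case False
        with \<open>x \<in> B \<union> D\<close> have "x \<in> D"
          by blast
        then obtain j where "d j = x"
          using from_nat_into_surj[OF \<open>countable D\<close>] unfolding d_def by blast
        then show ?thesis
          using points less_imp_le by blast
      qed
      then obtain j where "\<forall>k\<ge>j. f (N k) x \<le> (1/2)^k"
        by blast
      then show ?thesis
        using nonneg by (auto intro: summable_comparison_test'[of "\<lambda>k. (1/2::real)^k" j])
    qed
  qed
qed

lemma exists_weights_to_infinity_summable_on_positive_set:
  fixes a :: "nat \<Rightarrow> 'a \<Rightarrow> real"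
  assumes nonneg: "\<And>n x. 0 \<le> a n x" and summable: "\<And>x. summable (\<lambda>n. a n x)"
    and [measurable]: "\<And>n. a n \<in> borel_measurable M"
    and "C \<in> sets M" "0 < emeasure M C" "emeasure M C < \<infinity>"
    and "countable D"
  obtains B K where "B \<in> sets M" "0 < emeasure M B" "\<And>n. 0 < K n"
    "filterlim K at_top sequentially"
    "\<And>x. x \<in> B \<union> D \<Longrightarrow> summable (\<lambda>n. real (K n) * a n x)"
proof -
  have tail_nonneg: "0 \<le> tail_sum (\<lambda>n. a n x) N" for N x
    using nonneg summable by (rule tail_sum_nonneg)
  have tail_dec: "decseq (\<lambda>N. tail_sum (\<lambda>n. a n x) N)" for x
    using nonneg summable by (rule decseq_tail_sum)
  have tail_lim: "(\<lambda>N. tail_sum (\<lambda>n. a n x) N) \<longlonglongrightarrow> 0" for x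
    using summable by (rule tail_sum_LIMSEQ_zero)
  obtain B N where "B \<in> sets M" "0 < emeasure M B" and N: "\<And>k. k \<le> N k"
    and tails: "\<And>x. x \<in> B \<union> D \<Longrightarrow> summable (\<lambda>k. tail_sum (\<lambda>n. a n x) (N k))"
    by (rule exists_subsequence_summable_on_positive_set[of "\<lambda>N x. tail_sum (\<lambda>n. a n x) N",
          OF borel_measurable_tail_sum[OF assms(3)] tail_nonneg tail_dec tail_lim assms(4-7)])
      (rule that)
  show ?thesis
  proof (rule that[of B "\<lambda>n. Suc (card {k. N k \<le> n})"])
    show "filterlim (\<lambda>n. Suc (card {k. N k \<le> n})) at_top sequentially"
      using filterlim_compose[OF filterlim_Suc filterlim_card_le_at_top[OF N]] .
    show "summable (\<lambda>n. real (Suc (card {k. N k \<le> n})) * a n x)" if "x \<in> B \<union> D" for x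
      using nonneg summable N tails[OF that] by (rule summable_weighted_by_tail_indices)
  qed (simp_all add: \<open>B \<in> sets M\<close> \<open>0 < emeasure M B\<close>)
qed

lemma haar_measure_exists_finite_positive_set:
  fixes M :: "'a::{topological_group_add, t2_space} measure"
  assumes "haar_measure M" "locally_compact_space (euclidean :: 'a topology)"
  obtains C where "C \<in> sets M" "0 < emeasure M C" "emeasure M C < \<infinity>"
proof -
  have sets: "sets M = sets borel"
    using assms(1) unfolding haar_measure_def by (elim conjE)
  have finite: "\<forall>K. compact K \<longrightarrow> emeasure M K < \<infinity>"
    using assms(1) unfolding haar_measure_def by (elim conjE)
  have positive: "\<forall>U. open U \<and> U \<noteq> {} \<longrightarrow> 0 < emeasure M U"
    using assms(1) unfolding haar_measure_def by (elim conjE)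
  have "\<exists>U C. openin euclidean U \<and> compactin euclidean C \<and> (0::'a) \<in> U \<and> U \<subseteq> C"
    using assms(2) unfolding locally_compact_space_def by simp
  then obtain U C :: "'a set" where "openin euclidean U" "compactin euclidean C" "0 \<in> U" "U \<subseteq> C"
    by blast
  then have "open U" "compact C"
    using open_openin compactin_euclidean_iff by blast+
  then have "C \<in> sets M"
    by (simp add: sets borel_closed compact_imp_closed)
  have "0 < emeasure M U"
    using positive \<open>open U\<close> \<open>0 \<in> U\<close> by blast
  also have "\<dots> \<le> emeasure M C"
    using \<open>U \<subseteq> C\<close> \<open>C \<in> sets M\<close> by (rule emeasure_mono)
  finally show ?thesis
    using that \<open>C \<in> sets M\<close> finite \<open>compact C\<close> by blast
qed

lemma countable_dense_set_exists:
  obtains D :: "'a::second_countable_topology set" where "countable D" "closure D = UNIV"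
proof -
  obtain D :: "'a set" where "countable D" and dense: "\<And>X. open X \<Longrightarrow> X \<noteq> {} \<Longrightarrow> \<exists>d\<in>D. d \<in> X"
    using countable_dense_exists by blast
  have "- closure D \<inter> D = {}"
    using open_Int_closure_eq_empty[of "- closure D" D] by auto
  then have "- closure D = {}"
    using dense[of "- closure D"] by blast
  then show ?thesis
    using that \<open>countable D\<close> by auto
qed

lemma haar_measure_exists_weights_summable_on_large_set:
  fixes lam :: "'a::{topological_group_add, t2_space, second_countable_topology} measure"
    and a :: "nat \<Rightarrow> 'a \<Rightarrow> real"
  assumes "haar_measure lam" "locally_compact_space (euclidean :: 'a topology)"
    and "\<And>n x. 0 \<le> a n x" "\<And>x. summable (\<lambda>n. a n x)" "\<And>n. a n \<in> borel_measurable borel"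
  obtains A K where "A \<in> sets borel" "0 < emeasure lam A" "\<exists>D\<subseteq>A. countable D \<and> closure D = UNIV"
    "\<And>n. 0 < K n" "filterlim K at_top sequentially"
    "\<And>x. x \<in> A \<Longrightarrow> summable (\<lambda>n. real (K n) * a n x)"
proof -
  obtain D :: "'a set" where "countable D" "closure D = UNIV"
    by (rule countable_dense_set_exists)
  have sets_lam: "sets lam = sets borel"
    using assms(1) by (simp add: haar_measure_def)
  then have "a n \<in> borel_measurable lam" for n
    using assms(5) by (simp add: measurable_cong_sets[OF sets_lam refl])
  moreover obtain C where "C \<in> sets lam" "0 < emeasure lam C" "emeasure lam C < \<infinity>"
    using haar_measure_exists_finite_positive_set[OF assms(1,2)] .
  ultimately obtain B K where "B \<in> sets lam" "0 < emeasure lam B" "\<And>n. 0 < K n"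
    "filterlim K at_top sequentially"
    and summable: "\<And>x. x \<in> B \<union> D \<Longrightarrow> summable (\<lambda>n. real (K n) * a n x)"
    by (rule exists_weights_to_infinity_summable_on_positive_set[OF assms(3,4) _ _ _ _ \<open>countable D\<close>])
      (rule that)
  have "D \<in> sets borel"
    using \<open>countable D\<close> by (rule sets.countable[rotated]) simp
  show ?thesis
  proof (rule that[of "B \<union> D" K])
    show "B \<union> D \<in> sets borel"
      using \<open>B \<in> sets lam\<close> \<open>D \<in> sets borel\<close> sets_lam by simp
    have "emeasure lam B \<le> emeasure lam (B \<union> D)"
      using \<open>B \<union> D \<in> sets borel\<close> sets_lam by (intro emeasure_mono) simp_all
    with \<open>0 < emeasure lam B\<close> show "0 < emeasure lam (B \<union> D)"
      by (rule less_le_trans)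
    show "\<exists>D'\<subseteq>B \<union> D. countable D' \<and> closure D' = UNIV"
      using \<open>countable D\<close> \<open>closure D = UNIV\<close> by blast
  qed fact+
qed

section \<open>Length distribution of the cocycle\<close>

lemma summable_times_measure_level_sets:
  fixes w :: "'a \<Rightarrow> nat" and f :: "nat \<Rightarrow> real"
  assumes "finite_measure M" and w [measurable]: "w \<in> measurable M (count_space UNIV)"
    and nonneg: "\<And>n. 0 \<le> f n" and finite: "(\<integral>\<^sup>+x. ennreal (f (w x)) \<partial>M) < \<infinity>"
  shows "summable (\<lambda>n. f n * measure M {x\<in>space M. w x = n})"
proof -
  interpret finite_measure M by fact
  let ?level = "\<lambda>n. {x\<in>space M. w x = n}"
  have "(\<Sum>n. ennreal (f n * measure M (?level n)))
      = (\<Sum>n. \<integral>\<^sup>+x. ennreal (f n) * indicator (?level n) x \<partial>M)"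
  proof (rule suminf_cong)
    fix n
    have "?level n \<in> sets M"
      by measurable
    then show "ennreal (f n * measure M (?level n)) = (\<integral>\<^sup>+x. ennreal (f n) * indicator (?level n) x \<partial>M)"
      using nonneg[of n] by (simp add: ennreal_mult emeasure_eq_measure nn_integral_cmult_indicator)
  qed
  also have "\<dots> = (\<integral>\<^sup>+x. (\<Sum>n. ennreal (f n) * indicator (?level n) x) \<partial>M)"
    by (rule nn_integral_suminf[symmetric]) measurable
  also have "\<dots> = (\<integral>\<^sup>+x. ennreal (f (w x)) \<partial>M)"
  proof (rule nn_integral_cong)
    fix x assume "x \<in> space M"
    then show "(\<Sum>n. ennreal (f n) * indicator (?level n) x) = ennreal (f (w x))"
      by (intro suminf_cmult_indicator) (auto simp: disjoint_family_on_def)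
  qed
  finally show ?thesis
    using finite nonneg by (intro summable_suminf_not_top) auto
qed

lemma borel_measurable_measure_section:
  fixes f :: "'a \<Rightarrow> 'b \<Rightarrow> 'c"
  assumes "sigma_finite_measure M" "(\<lambda>(g, x). f g x) \<in> measurable (N \<Otimes>\<^sub>M M) L" "Q \<in> sets L"
  shows "(\<lambda>g. measure M {x\<in>space M. f g x \<in> Q}) \<in> borel_measurable N"
proof -
  interpret sigma_finite_measure M by fact
  let ?P = "(\<lambda>(g, x). f g x) -` Q \<inter> space (N \<Otimes>\<^sub>M M)"
  have "?P \<in> sets (N \<Otimes>\<^sub>M M)"
    using assms(2,3) by (rule measurable_sets)
  then have "(\<lambda>g. emeasure M (Pair g -` ?P)) \<in> borel_measurable N"
    by (rule measurable_emeasure_Pair)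
  moreover have "Pair g -` ?P = {x\<in>space M. f g x \<in> Q}" if "g \<in> space N" for g
    using that by (auto simp: space_pair_measure)
  ultimately show ?thesis
    unfolding measure_def by (subst measurable_cong[where g="\<lambda>g. enn2real (emeasure M (Pair g -` ?P))"]) auto
qed

definition phi_length_term ::
    "(real \<Rightarrow> real) \<Rightarrow> 'h::group_add set \<Rightarrow> 'x measure \<Rightarrow> ('g \<Rightarrow> 'x \<Rightarrow> 'h) \<Rightarrow> nat \<Rightarrow> 'g \<Rightarrow> real"
  where "phi_length_term \<phi> S \<nu> c n g = \<phi> (real n) * measure \<nu> {x\<in>space \<nu>. word_length S (c g x) = n}"

lemma summable_phi_length_term:
  fixes SH :: "'h::{topological_group_add, t2_space} set"
  assumes "prob_space \<nu>" "cocycle act \<nu> c" "generates SH" "compact SH"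
    and "\<forall>t\<ge>0. \<phi> t \<ge> 0" "phi_integrable \<phi> SG SH \<nu> c"
  shows "summable (\<lambda>n. phi_length_term \<phi> SH \<nu> c n g)"
  unfolding phi_length_term_def
proof (rule summable_times_measure_level_sets)
  show "finite_measure \<nu>"
    using assms(1) unfolding prob_space_def by blast
  have "(\<lambda>(g, x). c g x) \<in> borel_measurable (borel \<Otimes>\<^sub>M \<nu>)"
    using assms(2) unfolding cocycle_def by blast
  then have "c g \<in> borel_measurable \<nu>"
    using measurable_Pair2 by fastforce
  then show "(\<lambda>x. word_length SH (c g x)) \<in> measurable \<nu> (count_space UNIV)"
    using assms(3,4) by (intro measurable_word_length_comp)
  show "0 \<le> \<phi> (real n)" for n
    using assms(5) by simp
  show "(\<integral>\<^sup>+x. ennreal (\<phi> (real (word_length SH (c g x)))) \<partial>\<nu>) < \<infinity>"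
    using assms(6) unfolding phi_integrable_def by blast
qed

lemma borel_measurable_phi_length_term:
  fixes SH :: "'h::{topological_group_add, t2_space} set"
  assumes "prob_space \<nu>" "cocycle act \<nu> c" "generates SH" "compact SH"
  shows "phi_length_term \<phi> SH \<nu> c n \<in> borel_measurable borel"
proof -
  have "(\<lambda>(g, x). c g x) \<in> borel_measurable (borel \<Otimes>\<^sub>M \<nu>)"
    using assms(2) unfolding cocycle_def by blast
  from measurable_word_length_comp[OF assms(3,4) this]
  have "(\<lambda>(g, x). word_length SH (c g x)) \<in> measurable (borel \<Otimes>\<^sub>M \<nu>) (count_space UNIV)"
    by (simp add: case_prod_beta)
  from borel_measurable_measure_section[OF prob_space_imp_sigma_finite[OF assms(1)] this, of "{n}"]
  show ?thesis
    unfolding phi_length_term_def by simp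
qed

theorem mainTheorem15:
  fixes lamG :: "'g::{topological_group_add, t2_space, second_countable_topology} measure"
    and SG :: "'g set"
    and SH :: "'h::{topological_group_add, t2_space, second_countable_topology} set"
    and \<phi> :: "real \<Rightarrow> real"
    and \<nu> :: "'x::polish_space measure"
    and act :: "'g \<Rightarrow> 'x \<Rightarrow> 'x"
    and c :: "'g \<Rightarrow> 'x \<Rightarrow> 'h"
  assumes "locally_compact_space (euclidean :: 'g topology)"
    and "locally_compact_space (euclidean :: 'h topology)"
    and "compactly_generated TYPE('g)"
    and "compactly_generated TYPE('h)"
    and "compact SG" and "generates SG"
    and "compact SH" and "generates SH"
    and "haar_measure lamG"
    and "\<forall>t\<ge>0. \<phi> t \<ge> 0"
    and "sets \<nu> = sets borel"
    and "pmp_action act \<nu>"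
    and "free_action act \<nu>"
    and "cocycle act \<nu> c"
    and "phi_integrable \<phi> SG SH \<nu> c"
  shows "\<exists>(A::'g set) (K::nat \<Rightarrow> nat).
           A \<in> sets borel \<and> emeasure lamG A > 0 \<and>
           (\<exists>D\<subseteq>A. countable D \<and> closure D = UNIV) \<and>
           (\<forall>n\<ge>1. K n > 0) \<and> filterlim K at_top sequentially \<and>
           (\<forall>g\<in>A. summable (\<lambda>n. real (K (Suc n)) * \<phi> (real (Suc n)) *
                 measure \<nu> {x\<in>space \<nu>. word_length SH (c g x) = Suc n}))"
proof -
  have "prob_space \<nu>"
    using assms(12) unfolding pmp_action_def by blast
  have "0 \<le> phi_length_term \<phi> SH \<nu> c n g" for n g
    using assms(10) by (simp add: phi_length_term_def)
  moreover have "summable (\<lambda>n. phi_length_term \<phi> SH \<nu> c n g)" for g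
    using \<open>prob_space \<nu>\<close> assms(14,8,7,10,15) by (rule summable_phi_length_term)
  moreover have "phi_length_term \<phi> SH \<nu> c n \<in> borel_measurable borel" for n
    using \<open>prob_space \<nu>\<close> assms(14,8,7) by (rule borel_measurable_phi_length_term)
  ultimately obtain A K where "A \<in> sets borel" "0 < emeasure lamG A"
    "\<exists>D\<subseteq>A. countable D \<and> closure D = UNIV" "\<And>n. 0 < K n" "filterlim K at_top sequentially"
    and summable: "\<And>g. g \<in> A \<Longrightarrow> summable (\<lambda>n. real (K n) * phi_length_term \<phi> SH \<nu> c n g)"
    by (rule haar_measure_exists_weights_summable_on_large_set[OF assms(9,1)]) (rule that)
  have "summable (\<lambda>n. real (K (Suc n)) * \<phi> (real (Suc n)) *
      measure \<nu> {x\<in>space \<nu>. word_length SH (c g x) = Suc n})" if "g \<in> A" for g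
    using summable_Suc_iff[THEN iffD2, OF summable[OF that]]
    by (simp add: phi_length_term_def mult.assoc)
  then show ?thesis
    using \<open>A \<in> sets borel\<close> \<open>0 < emeasure lamG A\<close> \<open>\<exists>D\<subseteq>A. countable D \<and> closure D = UNIV\<close>
      \<open>\<And>n. 0 < K n\<close> \<open>filterlim K at_top sequentially\<close>
    by - (rule exI[of _ A], rule exI[of _ K], auto)
qed

end
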